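(* For an arbitrary finite set $\Theta$ of pairwise commuting Pauli operators, there exist two regular sets $\Theta'$ and $\Theta''$ of Pauli operators such that $\Theta'\cup\Theta''$ generates the same group as $\Theta$, i.e. $\langle\Theta'\cup\Theta''\rangle=\langle\Theta\rangle$.
   Context: Every Pauli operator $\sigma$ (with phase) on a set of qubits can be written uniquely as $\sigma=\nu\sigma_X\sigma_Z$ with $\nu\in\{\pm1,\pm i\}$, $\sigma_X$ a tensor product of Pauli $X$ and identity factors, and $\sigma_Z$ a tensor product of Pauli $Z$ and identity factors. A set $\{\sigma_1,\dots,\sigma_q\}$ of Pauli operators is regular if $\sigma_{X,i}$ commutes with $\sigma_{Z,j}$ for all $i\neq j$. *)

theory Defs
  imports "HOL-Algebra.Group" "HOL-Algebra.Generated_Groups"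
begin

text \<open>A Pauli operator on the qubits 0..n-1, written in the normal form
  nu * sigma_X * sigma_Z of the paper, is represented by a triple (k, A, B):
  nu = i^k (k < 4), sigma_X = tensor product of X on the qubits in A (identity
  elsewhere), sigma_Z = tensor product of Z on the qubits in B.\<close>

type_synonym pauli = "nat \<times> nat set \<times> nat set"

definition symdiff :: "nat set \<Rightarrow> nat set \<Rightarrow> nat set" where
  "symdiff A B = (A - B) \<union> (B - A)"

text \<open>Operator product: (i^k X^a Z^b)(i^l X^c Z^d) = i^(k+l) (-1)^|b \<inter> c| X^(a+c) Z^(b+d).\<close>
definition pauli_mult :: "pauli \<Rightarrow> pauli \<Rightarrow> pauli" where
  "pauli_mult p q = (case p of (k, a, b) \<Rightarrow> case q of (l, c, d) \<Rightarrow>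
      ((k + l + 2 * card (b \<inter> c)) mod 4, symdiff a c, symdiff b d))"

definition pauli_group :: "nat \<Rightarrow> pauli monoid" where
  "pauli_group n = \<lparr>carrier = {(k, a, b). k < 4 \<and> a \<subseteq> {..<n} \<and> b \<subseteq> {..<n}},
                     mult = pauli_mult, one = (0, {}, {})\<rparr>"

definition pauli_X :: "pauli \<Rightarrow> pauli" where
  "pauli_X p = (case p of (k, a, b) \<Rightarrow> (0, a, {}))"

definition pauli_Z :: "pauli \<Rightarrow> pauli" where
  "pauli_Z p = (case p of (k, a, b) \<Rightarrow> (0, {}, b))"

definition pauli_commute :: "pauli \<Rightarrow> pauli \<Rightarrow> bool" where
  "pauli_commute p q \<longleftrightarrow> pauli_mult p q = pauli_mult q p"

definition regular :: "pauli set \<Rightarrow> bool" where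
  "regular S \<longleftrightarrow> (\<forall>\<sigma>\<in>S. \<forall>\<tau>\<in>S. \<sigma> \<noteq> \<tau> \<longrightarrow> pauli_commute (pauli_X \<sigma>) (pauli_Z \<tau>))"

end

theory Submission
  imports Defs
begin

(*
  X_p commutes with Z_q exactly when
  |Z(q) \<inter> X(p)| is even; this parity is additive in p and in q, and p, q commute exactly when
  it is symmetric in p and q. Hence, in the group generated by commuting operators, the set of
  elements whose X- and Z-parts commute in both directions with those of a fixed generator is
  a subgroup, and a regular set generated inside it stays regular when that generator is added.

  Induct on |\<Theta>|. If X_\<sigma> anticommutes with Z_\<sigma> for some \<sigma> \<in> \<Theta>, multiply by \<sigma> every
  other generator whose X-part anticommutes with Z_\<sigma>; the new generators are orthogonal to \<sigma>,
  so \<sigma> joins the first regular set found for them. Otherwise, if \<Theta> is not regular, X_\<sigma>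
  anticommutes with Z_\<tau> for some \<sigma>, \<tau> \<in> \<Theta>, and by commutation X_\<tau> with Z_\<sigma>. Multiply
  by \<tau> each other generator whose X-part anticommutes with Z_\<sigma>, then by \<sigma> each one whose
  X-part anticommutes with Z_\<tau>; the results are orthogonal to both, and \<sigma> joins the first
  regular set, \<tau> the second. Such multiplications do not change the generated group.
*)

lemma symdiff_commute: "symdiff a b = symdiff b a"
  unfolding symdiff_def by auto

lemma symdiff_assoc: "symdiff (symdiff a b) c = symdiff a (symdiff b c)"
  unfolding symdiff_def by auto

lemma symdiff_empty [simp]: "symdiff a {} = a" "symdiff {} a = a"
  unfolding symdiff_def by auto

lemma symdiff_self [simp]: "symdiff a a = {}"
  unfolding symdiff_def by auto

lemma symdiff_eq_empty_iff: "symdiff a b = {} \<longleftrightarrow> a = b"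
  unfolding symdiff_def by auto

lemma symdiff_subset: "a \<subseteq> C \<Longrightarrow> b \<subseteq> C \<Longrightarrow> symdiff a b \<subseteq> C"
  unfolding symdiff_def by blast

lemma card_symdiff_Int:
  assumes "finite c"
  shows "card (symdiff a b \<inter> c) + 2 * card (a \<inter> b \<inter> c) = card (a \<inter> c) + card (b \<inter> c)"
proof -
  have "(a \<inter> c) \<union> (b \<inter> c) = (symdiff a b \<inter> c) \<union> (a \<inter> b \<inter> c)"
    and "(symdiff a b \<inter> c) \<inter> (a \<inter> b \<inter> c) = {}"
    and "(a \<inter> c) \<inter> (b \<inter> c) = a \<inter> b \<inter> c"
    unfolding symdiff_def by auto
  with assms card_Un_Int[of "a \<inter> c" "b \<inter> c"] card_Un_disjoint[of "symdiff a b \<inter> c" "a \<inter> b \<inter> c"]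
  show ?thesis
    by simp
qed

lemma even_card_symdiff_Int:
  assumes "finite c"
  shows "even (card (symdiff a b \<inter> c)) \<longleftrightarrow> (even (card (a \<inter> c)) \<longleftrightarrow> even (card (b \<inter> c)))"
proof -
  have "even (card (symdiff a b \<inter> c)) \<longleftrightarrow> even (card (symdiff a b \<inter> c) + 2 * card (a \<inter> b \<inter> c))"
    by simp
  also have "\<dots> \<longleftrightarrow> even (card (a \<inter> c) + card (b \<inter> c))"
    by (simp only: card_symdiff_Int[OF assms])
  finally show ?thesis
    by simp
qed

lemma mod_eq_if_add_multiple_eq:
  fixes x y :: nat
  assumes "x + m * u = y + m * v"
  shows "x mod m = y mod m"
  by (metis assms mod_mult_self2)

lemma mod_add_nested:
  fixes x y z :: nat
  shows "(x mod m + y + z) mod m = (x + y + z) mod m" "(x + y mod m + z) mod m = (x + y + z) mod m"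
  by (simp add: mod_add_left_eq add.assoc) (metis add.assoc mod_add_left_eq mod_add_right_eq)

lemma mod4_add_double_eq_iff: "((m::nat) + 2 * u) mod 4 = (m + 2 * v) mod 4 \<longleftrightarrow> (even u \<longleftrightarrow> even v)"
  by presburger

definition centralizer :: "('a, 'b) monoid_scheme \<Rightarrow> 'a set \<Rightarrow> 'a set" where
  "centralizer G T = {x \<in> carrier G. \<forall>t\<in>T. x \<otimes>\<^bsub>G\<^esub> t = t \<otimes>\<^bsub>G\<^esub> x}"

lemma (in group) subgroup_centralizer:
  assumes "T \<subseteq> carrier G"
  shows "subgroup (centralizer G T) G"
proof (rule subgroupI)
  fix x assume x: "x \<in> centralizer G T"
  show "inv x \<in> centralizer G T"
    unfolding centralizer_def
  proof (intro CollectI conjI ballI)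
    fix t assume "t \<in> T"
    with assms x have "t \<in> carrier G" "x \<in> carrier G" "x \<otimes> t = t \<otimes> x"
      by (auto simp: centralizer_def)
    then have "inv x \<otimes> t = inv x \<otimes> (t \<otimes> x) \<otimes> inv x"
      by (simp add: m_assoc)
    also have "\<dots> = inv x \<otimes> (x \<otimes> t) \<otimes> inv x"
      using \<open>x \<otimes> t = t \<otimes> x\<close> by simp
    also have "\<dots> = t \<otimes> inv x"
      using \<open>t \<in> carrier G\<close> \<open>x \<in> carrier G\<close> by (simp add: m_assoc[symmetric])
    finally show "inv x \<otimes> t = t \<otimes> inv x" .
  qed (use x in \<open>simp add: centralizer_def\<close>)
next
  fix x y assume x: "x \<in> centralizer G T" and y: "y \<in> centralizer G T"
  show "x \<otimes> y \<in> centralizer G T"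
    unfolding centralizer_def
  proof (intro CollectI conjI ballI)
    fix t assume "t \<in> T"
    with assms x y have "t \<in> carrier G" "x \<in> carrier G" "y \<in> carrier G"
      and xt: "x \<otimes> t = t \<otimes> x" and yt: "y \<otimes> t = t \<otimes> y"
      by (auto simp: centralizer_def)
    then have "x \<otimes> y \<otimes> t = x \<otimes> (t \<otimes> y)"
      by (simp add: m_assoc)
    also have "\<dots> = t \<otimes> x \<otimes> y"
      using \<open>t \<in> carrier G\<close> \<open>x \<in> carrier G\<close> \<open>y \<in> carrier G\<close> xt by (simp add: m_assoc[symmetric])
    finally show "x \<otimes> y \<otimes> t = t \<otimes> (x \<otimes> y)"
      using \<open>t \<in> carrier G\<close> \<open>x \<in> carrier G\<close> \<open>y \<in> carrier G\<close> by (simp add: m_assoc)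
  qed (use x y in \<open>simp add: centralizer_def\<close>)
qed (use assms in \<open>auto simp: centralizer_def intro!: exI[of _ \<one>]\<close>)

lemma (in group) generate_pairwise_commute:
  assumes "S \<subseteq> carrier G" and "\<And>s t. s \<in> S \<Longrightarrow> t \<in> S \<Longrightarrow> s \<otimes> t = t \<otimes> s"
    and "x \<in> generate G S" and "y \<in> generate G S"
  shows "x \<otimes> y = y \<otimes> x"
proof -
  have "generate G S \<subseteq> centralizer G S"
    using assms(1,2) by (intro generate_subgroup_incl subgroup_centralizer) (auto simp: centralizer_def)
  then have "S \<subseteq> centralizer G (generate G S)"
    using assms(1) by (auto simp: centralizer_def)
  then have "generate G S \<subseteq> centralizer G (generate G S)"
    using assms(1) by (intro generate_subgroup_incl subgroup_centralizer generate_incl)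
  with assms(3,4) show ?thesis
    by (auto simp: centralizer_def)
qed

lemma (in group) generate_eqI:
  assumes "A \<subseteq> carrier G" "B \<subseteq> carrier G" "A \<subseteq> generate G B" "B \<subseteq> generate G A"
  shows "generate G A = generate G B"
  using generate_subgroup_incl[OF assms(3) generate_is_subgroup[OF assms(2)]]
    generate_subgroup_incl[OF assms(4) generate_is_subgroup[OF assms(1)]] by (rule subset_antisym)

lemma (in group) generate_insert_cong:
  assumes "A \<subseteq> carrier G" "B \<subseteq> carrier G" "s \<in> carrier G" "generate G A = generate G B"
  shows "generate G (insert s A) = generate G (insert s B)"
proof (rule generate_eqI)
  show "insert s A \<subseteq> generate G (insert s B)"
    using assms(4) generate.incl[of _ A G] mono_generate[of B "insert s B"]
    by (blast intro: generate.incl)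
  show "insert s B \<subseteq> generate G (insert s A)"
    using assms(4) generate.incl[of _ B G] mono_generate[of A "insert s A"]
    by (blast intro: generate.incl)
qed (use assms in auto)

lemma (in group) generate_insert_image_mult:
  assumes "s \<in> carrier G" "R \<subseteq> carrier G"
  shows "generate G (insert s ((\<lambda>r. if P r then r else r \<otimes> s) ` R)) = generate G (insert s R)"
proof (rule generate_eqI)
  let ?R' = "(\<lambda>r. if P r then r else r \<otimes> s) ` R"
  have s: "s \<in> generate G (insert s R)" "s \<in> generate G (insert s ?R')"
    by (simp_all add: generate.incl)
  have "r \<in> generate G (insert s R) \<and> r \<otimes> s \<in> generate G (insert s R)" if "r \<in> R" for r
    using that s(1) by (simp add: generate.incl generate.eng)
  with s(1) show "insert s ?R' \<subseteq> generate G (insert s R)"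
    by auto
  have "r \<in> generate G (insert s ?R')" if r: "r \<in> R" for r
  proof (cases "P r")
    case True
    with r show ?thesis
      by (intro generate.incl) (auto intro: image_eqI[of _ _ r])
  next
    case False
    with r have "r \<otimes> s \<in> generate G (insert s ?R')"
      by (intro generate.incl) (auto intro: image_eqI[of _ _ r])
    moreover have "inv s \<in> generate G (insert s ?R')"
      by (simp add: generate.inv)
    moreover have "r = (r \<otimes> s) \<otimes> inv s"
      using assms r by (auto simp: m_assoc)
    ultimately show ?thesis
      using generate.eng by metis
  qed
  with s(2) show "insert s R \<subseteq> generate G (insert s ?R')"
    by auto
qed (use assms in auto)

abbreviation xsupp :: "pauli \<Rightarrow> nat set" where "xsupp p \<equiv> fst (snd p)"

abbreviation zsupp :: "pauli \<Rightarrow> nat set" where "zsupp p \<equiv> snd (snd p)"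

lemma pauli_mult_eq [simp]:
  "pauli_mult (k, a, b) (l, c, d) = ((k + l + 2 * card (b \<inter> c)) mod 4, symdiff a c, symdiff b d)"
  by (simp add: pauli_mult_def)

lemma pauli_mult_supp [simp]:
  "xsupp (pauli_mult p q) = symdiff (xsupp p) (xsupp q)"
  "zsupp (pauli_mult p q) = symdiff (zsupp p) (zsupp q)"
  by (cases p; cases q; simp)+

lemma pauli_group_simps [simp]:
  "mult (pauli_group n) = pauli_mult"
  "one (pauli_group n) = (0, {}, {})"
  "(k, a, b) \<in> carrier (pauli_group n) \<longleftrightarrow> k < 4 \<and> a \<subseteq> {..<n} \<and> b \<subseteq> {..<n}"
  by (simp_all add: pauli_group_def)

lemma pauli_mult_closed:
  "p \<in> carrier (pauli_group n) \<Longrightarrow> q \<in> carrier (pauli_group n)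
    \<Longrightarrow> pauli_mult p q \<in> carrier (pauli_group n)"
  by (cases p; cases q) (simp add: symdiff_subset)

lemma finite_supp_pauli:
  "p \<in> carrier (pauli_group n) \<Longrightarrow> finite (xsupp p) \<and> finite (zsupp p)"
  by (cases p) (auto intro: finite_subset)

lemma pauli_mult_assoc:
  assumes "finite (zsupp p)" and "finite (xsupp r)"
  shows "pauli_mult (pauli_mult p q) r = pauli_mult p (pauli_mult q r)"
proof -
  obtain k a b l c d m e f where pqr: "p = (k, a, b)" "q = (l, c, d)" "r = (m, e, f)"
    by (metis prod_cases3)
  have "finite b" "finite e"
    using assms pqr by simp_all
  then have left: "card (symdiff b d \<inter> e) + 2 * card (b \<inter> d \<inter> e) = card (b \<inter> e) + card (d \<inter> e)"
    and "card (symdiff c e \<inter> b) + 2 * card (c \<inter> e \<inter> b) = card (c \<inter> b) + card (e \<inter> b)"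
    by (simp_all only: card_symdiff_Int)
  then have right: "card (b \<inter> symdiff c e) + 2 * card (c \<inter> e \<inter> b) = card (b \<inter> c) + card (b \<inter> e)"
    by (simp only: Int_commute)
  have "(k + l + 2 * card (b \<inter> c) + m + 2 * card (symdiff b d \<inter> e)) mod 4
      = (k + (l + m + 2 * card (d \<inter> e)) + 2 * card (b \<inter> symdiff c e)) mod 4"
    by (rule mod_eq_if_add_multiple_eq[where u = "card (b \<inter> d \<inter> e)" and v = "card (c \<inter> e \<inter> b)"])
      (use left right in linarith)
  then have "((k + l + 2 * card (b \<inter> c)) mod 4 + m + 2 * card (symdiff b d \<inter> e)) mod 4
      = (k + (l + m + 2 * card (d \<inter> e)) mod 4 + 2 * card (b \<inter> symdiff c e)) mod 4"
    by (simp only: mod_add_nested)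
  then show ?thesis
    unfolding pqr pauli_mult_eq symdiff_assoc by (simp only: prod.inject simp_thms)
qed

lemma group_pauli_group: "group (pauli_group n)"
proof (rule groupI)
  fix x y assume "x \<in> carrier (pauli_group n)" "y \<in> carrier (pauli_group n)"
  then show "x \<otimes>\<^bsub>pauli_group n\<^esub> y \<in> carrier (pauli_group n)"
    by (simp add: pauli_mult_closed)
next
  fix x y z assume "x \<in> carrier (pauli_group n)" "z \<in> carrier (pauli_group n)"
  then show "x \<otimes>\<^bsub>pauli_group n\<^esub> y \<otimes>\<^bsub>pauli_group n\<^esub> z
      = x \<otimes>\<^bsub>pauli_group n\<^esub> (y \<otimes>\<^bsub>pauli_group n\<^esub> z)"
    by (simp add: pauli_mult_assoc finite_supp_pauli)
next
  fix x assume "x \<in> carrier (pauli_group n)"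
  then show "\<one>\<^bsub>pauli_group n\<^esub> \<otimes>\<^bsub>pauli_group n\<^esub> x = x"
    by (cases x) simp
next
  fix x assume x: "x \<in> carrier (pauli_group n)"
  obtain k a b where x_eq: "x = (k, a, b)"
    by (metis prod_cases3)
  define j where "j = (3 * (k + 2 * card (b \<inter> a))) mod 4"
  have "(j + k + 2 * card (b \<inter> a)) mod 4 = 0"
    unfolding j_def by (simp add: mod_add_left_eq add.assoc)
  then have "pauli_mult (j, a, b) x = (0, {}, {})"
    by (simp add: x_eq)
  moreover have "(j, a, b) \<in> carrier (pauli_group n)"
    using x by (simp add: j_def x_eq)
  ultimately show "\<exists>y\<in>carrier (pauli_group n). y \<otimes>\<^bsub>pauli_group n\<^esub> x = \<one>\<^bsub>pauli_group n\<^esub>"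
    by auto
qed simp

lemma pauli_inv_supp:
  assumes "x \<in> carrier (pauli_group n)"
  shows "xsupp (inv\<^bsub>pauli_group n\<^esub> x) = xsupp x" "zsupp (inv\<^bsub>pauli_group n\<^esub> x) = zsupp x"
proof -
  interpret group "pauli_group n" by (rule group_pauli_group)
  have "pauli_mult (inv\<^bsub>pauli_group n\<^esub> x) x = (0, {}, {})"
    using l_inv[OF assms] by simp
  from arg_cong[OF this, of xsupp] arg_cong[OF this, of zsupp]
  show "xsupp (inv\<^bsub>pauli_group n\<^esub> x) = xsupp x" "zsupp (inv\<^bsub>pauli_group n\<^esub> x) = zsupp x"
    by (simp_all add: symdiff_eq_empty_iff)
qed

definition xz_commute :: "pauli \<Rightarrow> pauli \<Rightarrow> bool" where
  "xz_commute p q \<longleftrightarrow> pauli_commute (pauli_X p) (pauli_Z q)"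

lemma xz_commute_iff_even: "xz_commute p q \<longleftrightarrow> even (card (zsupp q \<inter> xsupp p))"
  using mod4_add_double_eq_iff[of 0 0 "card (zsupp q \<inter> xsupp p)"]
  by (cases p; cases q) (auto simp: xz_commute_def pauli_commute_def pauli_X_def pauli_Z_def)

lemma pauli_commute_iff_xz_commute: "pauli_commute p q \<longleftrightarrow> (xz_commute p q \<longleftrightarrow> xz_commute q p)"
proof -
  obtain k a b l c d where pq: "p = (k, a, b)" "q = (l, c, d)"
    by (metis prod_cases3)
  have "pauli_commute p q \<longleftrightarrow> (k + l + 2 * card (b \<inter> c)) mod 4 = (k + l + 2 * card (d \<inter> a)) mod 4"
    unfolding pauli_commute_def pq by (simp add: symdiff_commute add.commute)
  then show ?thesis
    unfolding mod4_add_double_eq_iff xz_commute_iff_even pq by auto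
qed

lemma xz_commute_mult_left:
  assumes "finite (zsupp q)"
  shows "xz_commute (pauli_mult x y) q \<longleftrightarrow> (xz_commute x q \<longleftrightarrow> xz_commute y q)"
proof -
  have "zsupp q \<inter> symdiff (xsupp x) (xsupp y) = symdiff (xsupp x) (xsupp y) \<inter> zsupp q"
    "zsupp q \<inter> xsupp x = xsupp x \<inter> zsupp q" "zsupp q \<inter> xsupp y = xsupp y \<inter> zsupp q"
    by auto
  with assms show ?thesis
    by (simp add: xz_commute_iff_even even_card_symdiff_Int)
qed

lemma xz_commute_mult_right:
  assumes "finite (xsupp p)"
  shows "xz_commute p (pauli_mult x y) \<longleftrightarrow> (xz_commute p x \<longleftrightarrow> xz_commute p y)"
  using assms by (simp add: xz_commute_iff_even even_card_symdiff_Int)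

lemma xz_commute_inv [simp]:
  assumes "x \<in> carrier (pauli_group n)"
  shows "xz_commute (inv\<^bsub>pauli_group n\<^esub> x) q \<longleftrightarrow> xz_commute x q"
    and "xz_commute q (inv\<^bsub>pauli_group n\<^esub> x) \<longleftrightarrow> xz_commute q x"
  using assms by (simp_all add: xz_commute_iff_even pauli_inv_supp)

lemma subgroup_xz_orthogonal:
  assumes "\<sigma> \<in> carrier (pauli_group n)"
  shows "subgroup {x \<in> carrier (pauli_group n). xz_commute x \<sigma> \<and> xz_commute \<sigma> x} (pauli_group n)"
    (is "subgroup ?H _")
proof -
  interpret group "pauli_group n" by (rule group_pauli_group)
  have fin: "finite (xsupp \<sigma>)" "finite (zsupp \<sigma>)"
    using finite_supp_pauli[OF assms] by auto
  show ?thesis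
  proof (rule subgroupI)
    have "\<one>\<^bsub>pauli_group n\<^esub> \<in> ?H"
      by (simp add: xz_commute_iff_even)
    then show "?H \<noteq> {}"
      by blast
  next
    fix x y assume "x \<in> ?H" "y \<in> ?H"
    moreover from this have "x \<otimes>\<^bsub>pauli_group n\<^esub> y \<in> carrier (pauli_group n)"
      by blast
    ultimately show "x \<otimes>\<^bsub>pauli_group n\<^esub> y \<in> ?H"
      using fin by (simp add: xz_commute_mult_left xz_commute_mult_right)
  qed auto
qed

lemma regular_insert_xz_orthogonal:
  assumes "R \<subseteq> carrier (pauli_group n)" and "\<sigma> \<in> carrier (pauli_group n)"
    and "\<And>\<rho>. \<rho> \<in> R \<Longrightarrow> xz_commute \<rho> \<sigma> \<and> xz_commute \<sigma> \<rho>"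
    and "T \<subseteq> generate (pauli_group n) R" and "regular T"
  shows "regular (insert \<sigma> T)"
proof -
  interpret group "pauli_group n" by (rule group_pauli_group)
  have "generate (pauli_group n) R \<subseteq> {x \<in> carrier (pauli_group n). xz_commute x \<sigma> \<and> xz_commute \<sigma> x}"
    using assms(1,3) by (intro generate_subgroup_incl subgroup_xz_orthogonal[OF assms(2)]) auto
  with assms(4,5) show ?thesis
    unfolding regular_def xz_commute_def[symmetric] by blast
qed

lemma pauli_commute_generate:
  assumes "\<Theta> \<subseteq> carrier (pauli_group n)" and "\<forall>\<sigma>\<in>\<Theta>. \<forall>\<tau>\<in>\<Theta>. pauli_commute \<sigma> \<tau>"
    and "x \<in> generate (pauli_group n) \<Theta>" and "y \<in> generate (pauli_group n) \<Theta>"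
  shows "pauli_commute x y"
proof -
  interpret group "pauli_group n" by (rule group_pauli_group)
  show ?thesis
    using generate_pairwise_commute[OF assms(1) _ assms(3,4)] assms(2)
    unfolding pauli_commute_def by simp
qed

definition xz_clear :: "pauli \<Rightarrow> pauli \<Rightarrow> pauli \<Rightarrow> pauli" where
  "xz_clear \<sigma> \<tau> \<rho> = (if xz_commute \<rho> \<tau> then \<rho> else pauli_mult \<rho> \<sigma>)"

lemma xz_clear_closed:
  "\<sigma> \<in> carrier (pauli_group n) \<Longrightarrow> \<rho> \<in> carrier (pauli_group n)
    \<Longrightarrow> xz_clear \<sigma> \<tau> \<rho> \<in> carrier (pauli_group n)"
  by (simp add: xz_clear_def pauli_mult_closed)

lemma xz_commute_xz_clear:
  assumes "finite (zsupp \<tau>)" and "\<not> xz_commute \<sigma> \<tau>"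
  shows "xz_commute (xz_clear \<sigma> \<tau> \<rho>) \<tau>"
  using assms by (simp add: xz_clear_def xz_commute_mult_left)

lemma xz_commute_xz_clear_iff:
  assumes "finite (zsupp \<upsilon>)" and "xz_commute \<sigma> \<upsilon>"
  shows "xz_commute (xz_clear \<sigma> \<tau> \<rho>) \<upsilon> \<longleftrightarrow> xz_commute \<rho> \<upsilon>"
  using assms by (simp add: xz_clear_def xz_commute_mult_left)

lemma generate_insert_xz_clear:
  assumes "\<sigma> \<in> carrier (pauli_group n)" and "R \<subseteq> carrier (pauli_group n)"
  shows "generate (pauli_group n) (insert \<sigma> (xz_clear \<sigma> \<tau> ` R)) = generate (pauli_group n) (insert \<sigma> R)"
proof -
  interpret group "pauli_group n" by (rule group_pauli_group)
  show ?thesis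
    using generate_insert_image_mult[OF assms, of "\<lambda>\<rho>. xz_commute \<rho> \<tau>"]
    unfolding xz_clear_def[abs_def] by simp
qed

definition has_regular_split :: "nat \<Rightarrow> pauli set \<Rightarrow> bool" where
  "has_regular_split n \<Theta> \<longleftrightarrow> (\<exists>\<Theta>' \<Theta>''. \<Theta>' \<subseteq> carrier (pauli_group n) \<and> \<Theta>'' \<subseteq> carrier (pauli_group n)
     \<and> finite \<Theta>' \<and> finite \<Theta>'' \<and> regular \<Theta>' \<and> regular \<Theta>''
     \<and> generate (pauli_group n) (\<Theta>' \<union> \<Theta>'') = generate (pauli_group n) \<Theta>)"

lemma has_regular_split_if_regular:
  assumes "\<Theta> \<subseteq> carrier (pauli_group n)" and "finite \<Theta>" and "regular \<Theta>"
  shows "has_regular_split n \<Theta>"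
proof -
  have "regular {}"
    unfolding regular_def by blast
  with assms show ?thesis
    unfolding has_regular_split_def by (intro exI[of _ \<Theta>] exI[of _ "{}"]) simp
qed

lemma has_regular_split_insert2:
  assumes "R \<subseteq> carrier (pauli_group n)" and "\<sigma> \<in> carrier (pauli_group n)" and "\<tau> \<in> carrier (pauli_group n)"
    and "\<And>\<rho>. \<rho> \<in> R \<Longrightarrow> xz_commute \<rho> \<sigma> \<and> xz_commute \<sigma> \<rho>"
    and "\<And>\<rho>. \<rho> \<in> R \<Longrightarrow> xz_commute \<rho> \<tau> \<and> xz_commute \<tau> \<rho>"
    and "has_regular_split n R"
  shows "has_regular_split n (insert \<sigma> (insert \<tau> R))"
proof -
  interpret group "pauli_group n" by (rule group_pauli_group)
  obtain T1 T2 where T: "T1 \<subseteq> carrier (pauli_group n)" "T2 \<subseteq> carrier (pauli_group n)"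
    "finite T1" "finite T2" "regular T1" "regular T2"
    "generate (pauli_group n) (T1 \<union> T2) = generate (pauli_group n) R"
    using assms(6) unfolding has_regular_split_def by blast
  have "T1 \<subseteq> generate (pauli_group n) R" "T2 \<subseteq> generate (pauli_group n) R"
    using T(7) generate.incl[of _ "T1 \<union> T2" "pauli_group n"] by blast+
  then have "regular (insert \<sigma> T1)" "regular (insert \<tau> T2)"
    using regular_insert_xz_orthogonal[OF assms(1,2,4)] regular_insert_xz_orthogonal[OF assms(1,3,5)] T(5,6)
    by blast+
  moreover have "generate (pauli_group n) (insert \<sigma> T1 \<union> insert \<tau> T2)
      = generate (pauli_group n) (insert \<sigma> (insert \<tau> R))"
  proof -
    have "generate (pauli_group n) (insert \<tau> (T1 \<union> T2)) = generate (pauli_group n) (insert \<tau> R)"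
      using generate_insert_cong[of "T1 \<union> T2" R \<tau>] T assms(1,3) by simp
    then have "generate (pauli_group n) (insert \<sigma> (insert \<tau> (T1 \<union> T2)))
        = generate (pauli_group n) (insert \<sigma> (insert \<tau> R))"
      using generate_insert_cong[of "insert \<tau> (T1 \<union> T2)" "insert \<tau> R" \<sigma>] T assms(1-3) by simp
    moreover have "insert \<sigma> T1 \<union> insert \<tau> T2 = insert \<sigma> (insert \<tau> (T1 \<union> T2))"
      by blast
    ultimately show ?thesis
      by simp
  qed
  ultimately show ?thesis
    unfolding has_regular_split_def using T assms(2,3)
    by (intro exI[of _ "insert \<sigma> T1"] exI[of _ "insert \<tau> T2"]) auto
qed

lemma has_regular_split_of_reduction:
  assumes \<Theta>: "\<Theta> \<subseteq> carrier (pauli_group n)" "\<forall>\<sigma>\<in>\<Theta>. \<forall>\<tau>\<in>\<Theta>. pauli_commute \<sigma> \<tau>"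
    and \<sigma>\<tau>: "\<sigma> \<in> \<Theta>" "\<tau> \<in> \<Theta>"
    and gen: "generate (pauli_group n) (insert \<sigma> (insert \<tau> R)) = generate (pauli_group n) \<Theta>"
    and R: "\<And>\<rho>. \<rho> \<in> R \<Longrightarrow> xz_commute \<rho> \<sigma> \<and> xz_commute \<rho> \<tau>"
    and IH: "R \<subseteq> generate (pauli_group n) \<Theta> \<Longrightarrow> has_regular_split n R"
  shows "has_regular_split n \<Theta>"
proof -
  have R_gen: "R \<subseteq> generate (pauli_group n) \<Theta>"
    using gen generate.incl[of _ "insert \<sigma> (insert \<tau> R)" "pauli_group n"] by blast
  have orth: "xz_commute \<rho> \<upsilon> \<and> xz_commute \<upsilon> \<rho>" if \<rho>: "\<rho> \<in> R" and \<upsilon>: "\<upsilon> \<in> {\<sigma>, \<tau>}" for \<rho> \<upsilon>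
  proof -
    have "pauli_commute \<rho> \<upsilon>"
    proof (rule pauli_commute_generate[OF \<Theta>])
      show "\<rho> \<in> generate (pauli_group n) \<Theta>"
        using \<rho> R_gen by blast
      show "\<upsilon> \<in> generate (pauli_group n) \<Theta>"
        using \<upsilon> generate.incl[OF \<sigma>\<tau>(1)] generate.incl[OF \<sigma>\<tau>(2)] by blast
    qed
    with R[OF \<rho>] \<upsilon> show ?thesis
      by (auto simp: pauli_commute_iff_xz_commute)
  qed
  have "has_regular_split n (insert \<sigma> (insert \<tau> R))"
  proof (rule has_regular_split_insert2)
    show "R \<subseteq> carrier (pauli_group n)"
      using R_gen group.generate_incl[OF group_pauli_group \<Theta>(1)] by blast
  qed (use \<Theta>(1) \<sigma>\<tau> orth IH[OF R_gen] in auto)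
  then show ?thesis
    unfolding has_regular_split_def gen .
qed

lemma has_regular_split_if_self_anticommuting:
  assumes \<Theta>: "\<Theta> \<subseteq> carrier (pauli_group n)" "finite \<Theta>" "\<forall>\<sigma>\<in>\<Theta>. \<forall>\<tau>\<in>\<Theta>. pauli_commute \<sigma> \<tau>"
    and \<sigma>: "\<sigma> \<in> \<Theta>" "\<not> xz_commute \<sigma> \<sigma>"
    and IH: "\<And>R. finite R \<Longrightarrow> card R < card \<Theta> \<Longrightarrow> R \<subseteq> generate (pauli_group n) \<Theta>
      \<Longrightarrow> has_regular_split n R"
  shows "has_regular_split n \<Theta>"
proof -
  define R where "R = xz_clear \<sigma> \<sigma> ` (\<Theta> - {\<sigma>})"
  have \<sigma>_carrier: "\<sigma> \<in> carrier (pauli_group n)" and "\<Theta> - {\<sigma>} \<subseteq> carrier (pauli_group n)"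
    using \<Theta>(1) \<sigma>(1) by blast+
  with \<sigma>(1) have "generate (pauli_group n) (insert \<sigma> (insert \<sigma> R)) = generate (pauli_group n) \<Theta>"
    using generate_insert_xz_clear[OF \<sigma>_carrier, of "\<Theta> - {\<sigma>}" \<sigma>] unfolding R_def by (simp add: insert_absorb)
  moreover have "xz_commute \<rho> \<sigma>" if "\<rho> \<in> R" for \<rho>
    using that xz_commute_xz_clear[OF _ \<sigma>(2)] finite_supp_pauli[OF \<sigma>_carrier] unfolding R_def by blast
  moreover have "card R < card \<Theta>"
    using card_image_le[of "\<Theta> - {\<sigma>}" "xz_clear \<sigma> \<sigma>"] card_Diff1_less[OF \<Theta>(2) \<sigma>(1)] \<Theta>(2)
    unfolding R_def by simp
  moreover have "finite R"
    unfolding R_def using \<Theta>(2) by simp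
  ultimately show ?thesis
    using has_regular_split_of_reduction[OF \<Theta>(1,3) \<sigma>(1) \<sigma>(1), of R] IH by blast
qed

lemma has_regular_split_if_anticommuting_pair:
  assumes \<Theta>: "\<Theta> \<subseteq> carrier (pauli_group n)" "finite \<Theta>" "\<forall>\<sigma>\<in>\<Theta>. \<forall>\<tau>\<in>\<Theta>. pauli_commute \<sigma> \<tau>"
    and \<sigma>\<tau>: "\<sigma> \<in> \<Theta>" "\<tau> \<in> \<Theta>" "\<not> xz_commute \<sigma> \<tau>" "xz_commute \<sigma> \<sigma>" "xz_commute \<tau> \<tau>"
    and IH: "\<And>R. finite R \<Longrightarrow> card R < card \<Theta> \<Longrightarrow> R \<subseteq> generate (pauli_group n) \<Theta>
      \<Longrightarrow> has_regular_split n R"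
  shows "has_regular_split n \<Theta>"
proof -
  define rest where "rest = \<Theta> - {\<sigma>, \<tau>}"
  define R where "R = xz_clear \<sigma> \<tau> ` xz_clear \<tau> \<sigma> ` rest"
  have carrier: "\<sigma> \<in> carrier (pauli_group n)" "\<tau> \<in> carrier (pauli_group n)" "rest \<subseteq> carrier (pauli_group n)"
    using \<Theta>(1) \<sigma>\<tau>(1,2) unfolding rest_def by blast+
  have fin: "finite (zsupp \<sigma>)" "finite (zsupp \<tau>)"
    using finite_supp_pauli carrier by blast+
  have \<tau>\<sigma>: "\<not> xz_commute \<tau> \<sigma>"
    using \<Theta>(3) \<sigma>\<tau>(1-3) unfolding pauli_commute_iff_xz_commute by blast
  have "xz_clear \<tau> \<sigma> \<sigma> = \<sigma>" "xz_clear \<sigma> \<tau> \<tau> = \<tau>"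
    using \<sigma>\<tau>(4,5) by (simp_all add: xz_clear_def)
  moreover have "insert \<tau> (xz_clear \<tau> \<sigma> ` rest) \<subseteq> carrier (pauli_group n)"
    using carrier by (blast intro: xz_clear_closed)
  ultimately have "generate (pauli_group n) (insert \<sigma> (insert \<tau> R))
      = generate (pauli_group n) (insert \<tau> (insert \<sigma> (xz_clear \<tau> \<sigma> ` rest)))"
    using generate_insert_xz_clear[OF carrier(1), of "insert \<tau> (xz_clear \<tau> \<sigma> ` rest)" \<tau>]
    unfolding R_def by (simp add: insert_commute)
  also have "\<dots> = generate (pauli_group n) (insert \<tau> (insert \<sigma> rest))"
    using generate_insert_xz_clear[OF carrier(2), of "insert \<sigma> rest" \<sigma>] carrier \<open>xz_clear \<tau> \<sigma> \<sigma> = \<sigma>\<close>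
    by simp
  also have "insert \<tau> (insert \<sigma> rest) = \<Theta>"
    using \<sigma>\<tau>(1,2) unfolding rest_def by blast
  finally have gen: "generate (pauli_group n) (insert \<sigma> (insert \<tau> R)) = generate (pauli_group n) \<Theta>" .
  have "xz_commute \<rho> \<sigma> \<and> xz_commute \<rho> \<tau>" if \<rho>: "\<rho> \<in> R" for \<rho>
  proof -
    obtain r where r: "\<rho> = xz_clear \<sigma> \<tau> (xz_clear \<tau> \<sigma> r)"
      using \<rho> unfolding R_def by blast
    show ?thesis
      unfolding r xz_commute_xz_clear_iff[OF fin(1) \<sigma>\<tau>(4)]
      using xz_commute_xz_clear[OF fin(1) \<tau>\<sigma>] xz_commute_xz_clear[OF fin(2) \<sigma>\<tau>(3)] by blast
  qed
  moreover have "card R < card \<Theta>"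
  proof -
    have "card R \<le> card rest"
      unfolding R_def using \<Theta>(2) card_image_le[of "xz_clear \<tau> \<sigma> ` rest" "xz_clear \<sigma> \<tau>"]
        card_image_le[of rest "xz_clear \<tau> \<sigma>"] by (simp add: rest_def)
    also have "card rest < card \<Theta>"
      unfolding rest_def using \<Theta>(2) \<sigma>\<tau>(1) by (intro psubset_card_mono) auto
    finally show ?thesis .
  qed
  moreover have "finite R"
    unfolding R_def rest_def using \<Theta>(2) by simp
  ultimately show ?thesis
    using has_regular_split_of_reduction[OF \<Theta>(1,3) \<sigma>\<tau>(1,2) gen] IH by blast
qed

lemma has_regular_split_commuting:
  assumes "\<Theta> \<subseteq> carrier (pauli_group n)" and "finite \<Theta>" and "\<forall>\<sigma>\<in>\<Theta>. \<forall>\<tau>\<in>\<Theta>. pauli_commute \<sigma> \<tau>"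
  shows "has_regular_split n \<Theta>"
  using assms
proof (induction "card \<Theta>" arbitrary: \<Theta> rule: less_induct)
  case less
  have IH: "has_regular_split n R"
    if "finite R" "card R < card \<Theta>" "R \<subseteq> generate (pauli_group n) \<Theta>" for R
  proof (rule less.hyps[OF that(2) _ that(1)])
    show "R \<subseteq> carrier (pauli_group n)"
      using that(3) group.generate_incl[OF group_pauli_group less.prems(1)] by blast
    show "\<forall>\<sigma>\<in>R. \<forall>\<tau>\<in>R. pauli_commute \<sigma> \<tau>"
      using that(3) pauli_commute_generate[OF less.prems(1,3)] by blast
  qed
  show ?case
  proof (cases "\<forall>\<sigma>\<in>\<Theta>. xz_commute \<sigma> \<sigma>")
    case False
    then obtain \<sigma> where "\<sigma> \<in> \<Theta>" "\<not> xz_commute \<sigma> \<sigma>"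
      by blast
    then show ?thesis
      by (rule has_regular_split_if_self_anticommuting[OF less.prems _ _ IH])
  next
    case diagonal: True
    show ?thesis
    proof (cases "regular \<Theta>")
      case True
      then show ?thesis
        using has_regular_split_if_regular less.prems(1,2) by blast
    next
      case False
      then obtain \<sigma> \<tau> where "\<sigma> \<in> \<Theta>" "\<tau> \<in> \<Theta>" "\<not> xz_commute \<sigma> \<tau>"
        unfolding regular_def xz_commute_def by blast
      with diagonal show ?thesis
        by (intro has_regular_split_if_anticommuting_pair[OF less.prems _ _ _ _ _ IH]) auto
    qed
  qed
qed

theorem lemma9:
  fixes n :: nat and \<Theta> :: "pauli set"
  assumes "\<Theta> \<subseteq> carrier (pauli_group n)"
    and "finite \<Theta>"
    and "\<forall>\<sigma>\<in>\<Theta>. \<forall>\<tau>\<in>\<Theta>. pauli_commute \<sigma> \<tau>"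
  shows "\<exists>\<Theta>' \<Theta>''. \<Theta>' \<subseteq> carrier (pauli_group n) \<and> \<Theta>'' \<subseteq> carrier (pauli_group n)
           \<and> finite \<Theta>' \<and> finite \<Theta>'' \<and> regular \<Theta>' \<and> regular \<Theta>''
           \<and> generate (pauli_group n) (\<Theta>' \<union> \<Theta>'') = generate (pauli_group n) \<Theta>"
  using has_regular_split_commuting[OF assms] unfolding has_regular_split_def .

end
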